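(* Let $K$ be a field, $A=\{\alpha_1,\dots,\alpha_m\}\subset K$, $B=\{\beta_1,\dots,\beta_n\}\subset K$ finite sets with $|A|=m$, $|B|=n$, $f=\prod_{i}(x-\alpha_i)$, $g=\prod_j(x-\beta_j)$, and let $x$ be an indeterminate. Let $0\le k\le\min\{m-1,n-1\}$. Then $$F_k(f,g)=(-1)^{k(m-k)}\sum_{C'\subset A\cup\{x\},\ |C'|=k+1}\frac{\mathcal{R}((A\cup\{x\})\setminus C',B)}{\mathcal{R}(C',(A\cup\{x\})\setminus C')},$$ $$G_k(f,g)=(-1)^{m(n-k)}\sum_{D'\subset B\cup\{x\},\ |D'|=k+1}\frac{\mathcal{R}((B\cup\{x\})\setminus D',A)}{\mathcal{R}(D',(B\cup\{x\})\setminus D')}.$$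
   Context: For finite sets $Y,Z$, $\mathcal{R}(Y,Z):=\prod_{y\in Y,z\in Z}(y-z)$, with $\mathcal{R}(Y,Z)=1$ if $Y$ or $Z$ is empty. Write $f=\sum_{i=0}^m f_ix^i$, $g=\sum_{i=0}^ng_ix^i$ with $f_i=g_i=0$ outside the natural ranges. For $0\le k\le\min\{m-1,n-1\}$ consider the $(m+n-2k)\times(m+n-2k)$ matrices with rows indexed by $(f,j)$, $j=n-k-1,\dots,0$, followed by $(g,j)$, $j=m-k-1,\dots,0$, whose first $m+n-2k-1$ entries in row $(f,j)$ (resp. $(g,j)$) are the coefficients of $x^{m+n-k-1},\dots,x^{k+1}$ in $x^jf$ (resp. $x^jg$). $F_k(f,g)(x)$ is the determinant of such a matrix with last entry $x^j$ in rows $(f,j)$ and $0$ in rows $(g,j)$; $G_k(f,g)(x)$ is the determinant with last entry $0$ in rows $(f,j)$ and $x^j$ in rows $(g,j)$. *)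

theory Defs
  imports "HOL-Computational_Algebra.Polynomial" "HOL-Computational_Algebra.Fraction_Field"
    "Jordan_Normal_Form.Determinant"
begin

definition Res :: "'b::comm_ring_1 set \<Rightarrow> 'b set \<Rightarrow> 'b" where
  "Res Y Z = (\<Prod>y\<in>Y. \<Prod>z\<in>Z. y - z)"

text \<open>Coefficient of x^e in x^j * p, as a constant polynomial.\<close>
definition shcoeff :: "'a::comm_ring_1 poly \<Rightarrow> nat \<Rightarrow> nat \<Rightarrow> 'a poly" where
  "shcoeff p j e = (if j \<le> e then [:coeff p (e - j):] else 0)"

text \<open>Rows i < n-k are (f,j) with j = n-k-1-i,
  rows i >= n-k are (g,j) with j = m-k-1-(i-(n-k)). Columns c < m+n-2k-1 contain
  the coefficient of x^(m+n-k-1-c) in x^j f (resp. x^j g). The last column contains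
  x^j in the f-rows (if fside) or in the g-rows (if not fside), and 0 elsewhere.\<close>
definition sres_mat :: "bool \<Rightarrow> nat \<Rightarrow> nat \<Rightarrow> nat \<Rightarrow> 'a::comm_ring_1 poly \<Rightarrow> 'a poly \<Rightarrow> 'a poly mat" where
  "sres_mat fside m n k f g =
    (let N = m + n - 2 * k in
     mat N N (\<lambda>(i, c).
       let isf = (i < n - k);
           j = (if isf then n - k - 1 - i else m - k - 1 - (i - (n - k)));
           p = (if isf then f else g)
       in if c < N - 1 then shcoeff p j (m + n - k - 1 - c)
          else (if isf = fside then monom 1 j else 0)))"

definition Fk :: "nat \<Rightarrow> nat \<Rightarrow> nat \<Rightarrow> 'a::comm_ring_1 poly \<Rightarrow> 'a poly \<Rightarrow> 'a poly" where
  "Fk m n k f g = det (sres_mat True m n k f g)"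

definition Gk :: "nat \<Rightarrow> nat \<Rightarrow> nat \<Rightarrow> 'a::comm_ring_1 poly \<Rightarrow> 'a poly \<Rightarrow> 'a poly" where
  "Gk m n k f g = det (sres_mat False m n k f g)"

definition to_rf :: "'a::field poly \<Rightarrow> 'a poly fract" where
  "to_rf p = Fract p 1"

definition const_rf :: "'a::field \<Rightarrow> 'a poly fract" where
  "const_rf a = Fract [:a:] 1"

definition X_rf :: "'a::field poly fract" where
  "X_rf = Fract [:0, 1:] 1"

end

theory Submission
  imports Defs
begin

text \<open>
  In the matrix defining \<open>F\<^sub>k(f, g)\<close>, replace the variable in the last column by a point \<open>x\<close>,
  move that column to position \<open>n - k\<close> and pad the matrix with \<open>k + 1\<close> rows of monomials: the
  result \<open>T\<close> lists the coefficients of \<open>x\<^sup>j f\<close>, \<open>x\<^sup>j g\<close> and \<open>x\<^sup>j\<close> for \<open>j \<le> k\<close>. A matrix \<open>W\<close> whose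
  last \<open>m + 1\<close> columns evaluate polynomials at the points \<open>x, \<alpha>\<^sub>1, \<dots>, \<alpha>\<^sub>m\<close> makes \<open>T W\<close> block
  lower triangular, because \<open>f\<close> vanishes at these points (at \<open>x\<close> after cancelling \<open>f(x)\<close> against
  the moved column). The \<open>f\<close>-block is unitriangular, \<open>det W\<close> is the Vandermonde determinant of
  the points, and the remaining block is a Vandermonde matrix whose first \<open>m - k\<close> rows are
  weighted by \<open>g\<close>. The generalized Laplace expansion along these rows, together with the
  factorization of a Vandermonde determinant over a partition of its points, evaluates it as
  \<open>det W\<close> times the sum, over the \<open>(m - k)\<close>-subsets \<open>P\<close> of \<open>A \<union> {x}\<close>, of the product of the
  \<open>g(a)\<close>, \<open>a \<in> P\<close>, divided by \<open>R(P, (A \<union> {x}) - P)\<close>; passing to the complements of \<open>P\<close> gives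
  the formula. Taking for \<open>x\<close> the variable of \<open>K(x)\<close> proves it for \<open>F\<^sub>k\<close>; a block row swap
  reduces \<open>G\<^sub>k(f, g)\<close> to \<open>F\<^sub>k(g, f)\<close>.
\<close>

section \<open>Determinants with columns labelled by a list\<close>

lemma nths_cong:
  "(\<And>i. i < length xs \<Longrightarrow> i \<in> A \<longleftrightarrow> i \<in> B) \<Longrightarrow> nths xs A = nths xs B"
proof (induct xs arbitrary: A B)
  case (Cons x xs)
  have "nths xs {j. Suc j \<in> A} = nths xs {j. Suc j \<in> B}"
    by (rule Cons.hyps) (use Cons.prems in auto)
  moreover have "0 \<in> A \<longleftrightarrow> 0 \<in> B" using Cons.prems by auto
  ultimately show ?case by (simp add: nths_Cons)
qed simp

lemma length_nths_subset: "J \<subseteq> {..<length cs} \<Longrightarrow> length (nths cs J) = card J"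
  unfolding length_nths by (rule arg_cong[of _ _ card]) auto

lemma nths_snoc_insert_last:
  assumes "J \<subseteq> {..<length cs}"
  shows "nths (cs @ [y]) (insert (length cs) J) = nths cs J @ [y]"
proof -
  have "nths cs (insert (length cs) J) = nths cs J" by (rule nths_cong) auto
  then show ?thesis by (simp add: nths_append nths_singleton)
qed

lemma nths_snoc_subset:
  assumes "J \<subseteq> {..<length cs}"
  shows "nths (cs @ [y]) J = nths cs J"
  using assms by (auto simp: nths_append nths_singleton)

definition det_cols :: "(nat \<Rightarrow> 'c \<Rightarrow> 'a::comm_ring_1) \<Rightarrow> 'c list \<Rightarrow> 'a" where
  "det_cols \<phi> cs = det (mat (length cs) (length cs) (\<lambda>(i, j). \<phi> i (cs ! j)))"

lemma det_cols_Nil [simp]: "det_cols \<phi> [] = 1"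
  unfolding det_cols_def by (rule det_dim_zero) auto

lemma det_cols_cong:
  "(\<And>i c. i < length cs \<Longrightarrow> c \<in> set cs \<Longrightarrow> \<phi> i c = \<psi> i c) \<Longrightarrow> det_cols \<phi> cs = det_cols \<psi> cs"
  unfolding det_cols_def by (intro arg_cong[of _ _ det] eq_matI) auto

lemma det_cols_snoc:
  "det_cols \<phi> (cs @ [y]) =
    (\<Sum>i<Suc (length cs). (-1)^(i + length cs) * \<phi> i y * det_cols (\<lambda>i'. \<phi> (insert_index i i')) cs)"
proof -
  let ?r = "length cs"
  define A where "A = mat (Suc ?r) (Suc ?r) (\<lambda>(i, j). \<phi> i ((cs @ [y]) ! j))"
  have A: "A \<in> carrier_mat (Suc ?r) (Suc ?r)" unfolding A_def by auto
  have minor: "mat_delete A i ?r = mat ?r ?r (\<lambda>(i', j). \<phi> (insert_index i i') (cs ! j))" for i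
    unfolding mat_delete_def A_def insert_index_def by (rule eq_matI) (auto simp: nth_append)
  have entry: "A $$ (i, ?r) = \<phi> i y" if "i < Suc ?r" for i
    using that unfolding A_def by simp
  have "det_cols \<phi> (cs @ [y]) = det A" unfolding det_cols_def A_def by simp
  also have "\<dots> = (\<Sum>i<Suc ?r. A $$ (i, ?r) * cofactor A i ?r)"
    by (rule laplace_expansion_column[OF A]) simp
  also have "\<dots> = (\<Sum>i<Suc ?r. (-1)^(i + ?r) * \<phi> i y * det_cols (\<lambda>i'. \<phi> (insert_index i i')) cs)"
    by (intro sum.cong refl) (simp add: cofactor_def det_cols_def minor entry)
  finally show ?thesis .
qed

lemma det_cols_mult_col:
  "det_cols (\<lambda>i z. \<psi> i z * h z) cs = prod_list (map h cs) * det_cols \<psi> cs"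
proof -
  let ?n = "length cs"
  let ?M = "mat ?n ?n (\<lambda>(i, j). \<psi> i (cs ! j))"
  let ?Mh = "mat ?n ?n (\<lambda>(i, j). \<psi> i (cs ! j) * h (cs ! j))"
  have diag_prod: "(\<Prod>i = 0..<?n. \<psi> i (cs ! p i) * h (cs ! p i)) =
      prod_list (map h cs) * (\<Prod>i = 0..<?n. \<psi> i (cs ! p i))"
    if p: "p permutes {0..<?n}" for p
    using prod.permute[OF p, of "\<lambda>j. h (cs ! j)"]
    by (simp add: prod.distrib prod.list_conv_set_nth comp_def mult.commute)
  have Mh: "?Mh \<in> carrier_mat ?n ?n" and M: "?M \<in> carrier_mat ?n ?n" by auto
  show ?thesis
    unfolding det_cols_def det_def'[OF Mh] det_def'[OF M] sum_distrib_left
    by (auto intro!: sum.cong simp: diag_prod mult.left_commute)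
qed

definition index_subsets :: "nat \<Rightarrow> nat \<Rightarrow> nat set set" where
  "index_subsets r p = {J. J \<subseteq> {..<r} \<and> card J = p}"

lemma finite_index_subsets [simp]: "finite (index_subsets r p)"
  unfolding index_subsets_def by (rule finite_subset[of _ "Pow {..<r}"]) auto

lemma index_subsets_0: "index_subsets r 0 = {{}}"
  unfolding index_subsets_def using finite_subset[of _ "{..<r}"] by auto

lemma index_subsets_Suc_Suc:
  "index_subsets (Suc r) (Suc q) = insert r ` index_subsets r q \<union> index_subsets r (Suc q)"
proof (intro equalityI subsetI)
  fix J assume J: "J \<in> index_subsets (Suc r) (Suc q)"
  then have fin: "finite J" by (auto simp: index_subsets_def intro: finite_subset)
  show "J \<in> insert r ` index_subsets r q \<union> index_subsets r (Suc q)"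
  proof (cases "r \<in> J")
    case True
    then have "J = insert r (J - {r})" "J - {r} \<in> index_subsets r q"
      using J fin by (auto simp: index_subsets_def less_Suc_eq)
    then show ?thesis by blast
  qed (use J in \<open>auto simp: index_subsets_def less_Suc_eq\<close>)
next
  fix J assume "J \<in> insert r ` index_subsets r q \<union> index_subsets r (Suc q)"
  then show "J \<in> index_subsets (Suc r) (Suc q)"
  proof
    assume "J \<in> insert r ` index_subsets r q"
    then obtain J' where "J' \<subseteq> {..<r}" "card J' = q" "J = insert r J'"
      by (auto simp: index_subsets_def)
    moreover have "finite J'" "r \<notin> J'" using \<open>J' \<subseteq> {..<r}\<close> finite_subset by auto
    ultimately show ?thesis by (auto simp: index_subsets_def)
  qed (auto simp: index_subsets_def)
qed

lemma inj_on_insert_index_subsets: "inj_on (insert r) (index_subsets r q)"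
  by (rule inj_onI) (auto simp: index_subsets_def dest!: insert_ident[THEN iffD1, rotated 2])

text \<open>\<open>laplace_sign J\<close> is the sign of the shuffle moving the columns in \<open>J\<close> to the front.\<close>

definition laplace_sign :: "nat set \<Rightarrow> 'a::comm_ring_1" where
  "laplace_sign J = (-1) ^ (\<Sum>c\<in>J. card ({..<c} - J))"

lemma laplace_sign_insert:
  assumes J: "J \<subseteq> {..<r}" and fin: "finite J"
  shows "laplace_sign (insert r J) = (-1)^(r - card J) * (laplace_sign J :: 'a::comm_ring_1)"
proof -
  have "r \<notin> J" using J by auto
  with fin J have "(\<Sum>c\<in>insert r J. card ({..<c} - insert r J)) = card ({..<r} - J) + (\<Sum>c\<in>J. card ({..<c} - J))"
    by (auto intro!: sum.cong arg_cong[of _ _ card])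
  moreover have "card ({..<r} - J) = r - card J" using J fin by (simp add: card_Diff_subset)
  ultimately show ?thesis unfolding laplace_sign_def by (simp add: power_add)
qed

lemma laplace_sign_square: "laplace_sign J * laplace_sign J = (1::'a::comm_ring_1)"
  unfolding laplace_sign_def by (simp add: power_mult_distrib[symmetric])

definition laplace_term :: "(nat \<Rightarrow> 'c \<Rightarrow> 'a::comm_ring_1) \<Rightarrow> 'c list \<Rightarrow> nat \<Rightarrow> nat set \<Rightarrow> 'a" where
  "laplace_term \<phi> cs p J =
     laplace_sign J * det_cols \<phi> (nths cs J) * det_cols (\<lambda>i. \<phi> (i + p)) (nths cs ({..<length cs} - J))"

text \<open>Expanding \<open>det_cols \<phi> (cs @ [y])\<close> along its last column, the minors of the first
  \<open>Suc q\<close> rows produce the subsets containing the last column, the others those avoiding it.\<close>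

lemma det_cols_snoc_laplace_head:
  fixes \<phi> :: "nat \<Rightarrow> 'c \<Rightarrow> 'a::comm_ring_1"
  assumes IH: "\<And>\<psi> :: nat \<Rightarrow> 'c \<Rightarrow> 'a. det_cols \<psi> cs = (\<Sum>J\<in>index_subsets (length cs) q. laplace_term \<psi> cs q J)"
  shows "(\<Sum>i<Suc q. (-1)^(i + length cs) * \<phi> i y * det_cols (\<lambda>i'. \<phi> (insert_index i i')) cs) =
         (\<Sum>J\<in>insert (length cs) ` index_subsets (length cs) q. laplace_term \<phi> (cs @ [y]) (Suc q) J)"
proof -
  let ?r = "length cs"
  let ?\<psi> = "\<lambda>i. \<phi> (i + Suc q)"
  let ?compl = "\<lambda>J. nths cs ({..<?r} - J)"
  let ?minor = "\<lambda>i. det_cols (\<lambda>i'. \<phi> (insert_index i i'))"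
  have minor: "?minor i cs = (\<Sum>J\<in>index_subsets ?r q. laplace_sign J * ?minor i (nths cs J) * det_cols ?\<psi> (?compl J))"
    if "i < Suc q" for i
  proof -
    have "(\<lambda>i'. \<phi> (insert_index i (i' + q))) = ?\<psi>" using that by (auto simp: insert_index_def)
    then show ?thesis using IH[of "\<lambda>i'. \<phi> (insert_index i i')"] by (simp add: laplace_term_def)
  qed
  have last_col: "(\<Sum>i<Suc q. (-1)^(i + ?r) * \<phi> i y * ?minor i (nths cs J)) =
      (-1)^(?r - card J) * det_cols \<phi> (nths cs J @ [y])" if J: "J \<in> index_subsets ?r q" for J
  proof -
    have card: "card J = q" and qr: "q \<le> ?r" and len: "length (nths cs J) = q"
      using J length_nths_subset[of J cs] card_mono[of "{..<?r}" J] by (auto simp: index_subsets_def)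
    have "(-1::'a)^(i + ?r) = (-1)^(?r - q) * (-1)^(i + q)" for i
      using qr by (simp add: power_add[symmetric] add.commute)
    then have "(\<Sum>i<Suc q. (-1)^(i + ?r) * \<phi> i y * ?minor i (nths cs J)) =
        (-1)^(?r - q) * (\<Sum>i<Suc q. (-1)^(i + q) * \<phi> i y * ?minor i (nths cs J))"
      unfolding sum_distrib_left by (simp add: mult_ac)
    also have "(\<Sum>i<Suc q. (-1)^(i + q) * \<phi> i y * ?minor i (nths cs J)) = det_cols \<phi> (nths cs J @ [y])"
      using len by (simp add: det_cols_snoc)
    finally show ?thesis using card by simp
  qed
  have "(\<Sum>i<Suc q. (-1)^(i + ?r) * \<phi> i y * ?minor i cs) =
      (\<Sum>J\<in>index_subsets ?r q. laplace_sign J * det_cols ?\<psi> (?compl J) *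
         (\<Sum>i<Suc q. (-1)^(i + ?r) * \<phi> i y * ?minor i (nths cs J)))"
    unfolding sum_distrib_left
    by (subst sum.swap) (simp add: minor sum_distrib_left mult_ac del: sum.lessThan_Suc)
  also have "\<dots> = (\<Sum>J\<in>index_subsets ?r q. laplace_term \<phi> (cs @ [y]) (Suc q) (insert ?r J))"
  proof (intro sum.cong refl)
    fix J assume J: "J \<in> index_subsets ?r q"
    then have Jr: "J \<subseteq> {..<?r}" and fin: "finite J"
      by (auto simp: index_subsets_def intro: finite_subset)
    have "{..<Suc ?r} - insert ?r J = {..<?r} - J" by auto
    moreover have "nths (cs @ [y]) ({..<?r} - J) = ?compl J" by (rule nths_snoc_subset) auto
    ultimately show "laplace_sign J * det_cols ?\<psi> (?compl J) *
        (\<Sum>i<Suc q. (-1)^(i + ?r) * \<phi> i y * ?minor i (nths cs J)) =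
        laplace_term \<phi> (cs @ [y]) (Suc q) (insert ?r J)"
      unfolding last_col[OF J]
      by (simp add: laplace_term_def nths_snoc_insert_last[OF Jr]
          laplace_sign_insert[OF Jr fin] mult_ac)
  qed
  also have "\<dots> = (\<Sum>J\<in>insert ?r ` index_subsets ?r q. laplace_term \<phi> (cs @ [y]) (Suc q) J)"
    by (simp add: sum.reindex[OF inj_on_insert_index_subsets])
  finally show ?thesis .
qed

lemma det_cols_snoc_laplace_tail:
  fixes \<phi> :: "nat \<Rightarrow> 'c \<Rightarrow> 'a::comm_ring_1"
  assumes p: "p \<le> length cs"
    and IH: "\<And>\<psi> :: nat \<Rightarrow> 'c \<Rightarrow> 'a. det_cols \<psi> cs = (\<Sum>J\<in>index_subsets (length cs) p. laplace_term \<psi> cs p J)"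
  shows "(\<Sum>i\<in>{p..<Suc (length cs)}. (-1)^(i + length cs) * \<phi> i y * det_cols (\<lambda>i'. \<phi> (insert_index i i')) cs) =
         (\<Sum>J\<in>index_subsets (length cs) p. laplace_term \<phi> (cs @ [y]) p J)"
proof -
  let ?r = "length cs"
  let ?\<psi> = "\<lambda>i. \<phi> (i + p)"
  let ?compl = "\<lambda>J. nths cs ({..<?r} - J)"
  let ?minor = "\<lambda>i. det_cols (\<lambda>i'. ?\<psi> (insert_index (i - p) i'))"
  have minor: "det_cols (\<lambda>i'. \<phi> (insert_index i i')) cs =
      (\<Sum>J\<in>index_subsets ?r p. laplace_sign J * det_cols \<phi> (nths cs J) * ?minor i (?compl J))"
    if "p \<le> i" for i
  proof -
    have "det_cols (\<lambda>i'. \<phi> (insert_index i i')) (nths cs J) = det_cols \<phi> (nths cs J)"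
      if "J \<in> index_subsets ?r p" for J
      by (rule det_cols_cong)
        (use \<open>p \<le> i\<close> length_nths_subset[of J cs] that in \<open>auto simp: index_subsets_def insert_index_def\<close>)
    moreover have "(\<lambda>i'. \<phi> (insert_index i (i' + p))) = (\<lambda>i'. ?\<psi> (insert_index (i - p) i'))"
      using that by (intro ext) (auto simp: insert_index_def)
    ultimately show ?thesis
      using IH[of "\<lambda>i'. \<phi> (insert_index i i')"] by (simp add: laplace_term_def cong: sum.cong)
  qed
  have last_col: "(\<Sum>i\<in>{p..<Suc ?r}. (-1)^(i + ?r) * \<phi> i y * ?minor i (?compl J)) = det_cols ?\<psi> (?compl J @ [y])"
    if J: "J \<in> index_subsets ?r p" for J
  proof -
    have "finite J" "J \<subseteq> {..<?r}" "card J = p"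
      using J by (auto simp: index_subsets_def intro: finite_subset)
    then have len: "length (?compl J) = ?r - p"
      using length_nths_subset[of "{..<?r} - J" cs] by (simp add: card_Diff_subset)
    have sign: "(-1::'a)^(i + p + ?r) = (-1)^(i + (?r - p))" for i
    proof -
      have "i + p + ?r = (i + (?r - p)) + 2 * p" using p by simp
      moreover have "(-1::'a)^((i + (?r - p)) + 2 * p) = (-1)^(i + (?r - p))"
        by (simp only: power_add power_mult) simp
      ultimately show ?thesis by (simp only:)
    qed
    have "(\<Sum>i\<in>{p..<Suc ?r}. (-1)^(i + ?r) * \<phi> i y * ?minor i (?compl J)) =
        (\<Sum>i<Suc (?r - p). (-1)^(i + (?r - p)) * ?\<psi> i y * det_cols (\<lambda>i'. ?\<psi> (insert_index i i')) (?compl J))"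
      using sum.shift_bounds_nat_ivl[of "\<lambda>i. (-1)^(i + ?r) * \<phi> i y * ?minor i (?compl J)" 0 p "Suc (?r - p)"] p
      by (simp add: sign lessThan_atLeast0 Suc_diff_le)
    also have "\<dots> = det_cols ?\<psi> (?compl J @ [y])" by (simp add: det_cols_snoc len)
    finally show ?thesis .
  qed
  have "(\<Sum>i\<in>{p..<Suc ?r}. (-1)^(i + ?r) * \<phi> i y * det_cols (\<lambda>i'. \<phi> (insert_index i i')) cs) =
      (\<Sum>J\<in>index_subsets ?r p. laplace_sign J * det_cols \<phi> (nths cs J) *
         (\<Sum>i\<in>{p..<Suc ?r}. (-1)^(i + ?r) * \<phi> i y * ?minor i (?compl J)))"
    unfolding sum_distrib_left
    by (subst sum.swap) (simp add: minor sum_distrib_left mult_ac)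
  also have "\<dots> = (\<Sum>J\<in>index_subsets ?r p. laplace_term \<phi> (cs @ [y]) p J)"
  proof (intro sum.cong refl)
    fix J assume J: "J \<in> index_subsets ?r p"
    then have Jr: "J \<subseteq> {..<?r}" by (simp add: index_subsets_def)
    have "{..<Suc ?r} - J = insert ?r ({..<?r} - J)" using Jr by auto
    then have compl_snoc: "nths (cs @ [y]) ({..<length (cs @ [y])} - J) = ?compl J @ [y]"
      by (simp add: nths_snoc_insert_last)
    show "laplace_sign J * det_cols \<phi> (nths cs J) *
        (\<Sum>i\<in>{p..<Suc ?r}. (-1)^(i + ?r) * \<phi> i y * ?minor i (?compl J)) =
        laplace_term \<phi> (cs @ [y]) p J"
      unfolding last_col[OF J] laplace_term_def nths_snoc_subset[OF Jr] compl_snoc by simp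
  qed
  finally show ?thesis .
qed

theorem det_cols_laplace:
  fixes \<phi> :: "nat \<Rightarrow> 'c \<Rightarrow> 'a::comm_ring_1"
  assumes "p \<le> length cs"
  shows "det_cols \<phi> cs = (\<Sum>J\<in>index_subsets (length cs) p. laplace_term \<phi> cs p J)"
  using assms
proof (induct cs arbitrary: \<phi> p rule: rev_induct)
  case Nil
  then show ?case by (simp add: index_subsets_0 laplace_term_def laplace_sign_def)
next
  case (snoc y cs)
  let ?r = "length cs"
  show ?case
  proof (cases p)
    case 0
    then show ?thesis by (simp add: index_subsets_0 laplace_term_def laplace_sign_def)
  next
    case (Suc q)
    let ?t = "\<lambda>i. (-1)^(i + ?r) * \<phi> i y * det_cols (\<lambda>i'. \<phi> (insert_index i i')) cs"
    let ?term = "laplace_term \<phi> (cs @ [y]) p"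
    have head: "sum ?t {0..<Suc q} = sum ?term (insert ?r ` index_subsets ?r q)"
      unfolding Suc atLeast0LessThan
      by (rule det_cols_snoc_laplace_head[OF snoc.hyps]) (use snoc.prems Suc in simp)
    have tail: "sum ?t {Suc q..<Suc ?r} = sum ?term (index_subsets ?r (Suc q))"
    proof (cases "Suc q \<le> ?r")
      case True
      then show ?thesis
        using det_cols_snoc_laplace_tail[OF True snoc.hyps[OF True], of \<phi> y] unfolding Suc by simp
    next
      case False
      have "J \<notin> index_subsets ?r (Suc q)" for J
        using card_mono[of "{..<?r}" J] \<open>\<not> Suc q \<le> ?r\<close> by (auto simp: index_subsets_def)
      then have "index_subsets ?r (Suc q) = {}" by blast
      moreover have "{Suc q..<Suc ?r} = {}" using \<open>\<not> Suc q \<le> ?r\<close> by simp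
      ultimately show ?thesis by simp
    qed
    have "det_cols \<phi> (cs @ [y]) = sum ?t {0..<Suc ?r}"
      unfolding det_cols_snoc lessThan_atLeast0 ..
    also have "\<dots> = sum ?t {0..<Suc q} + sum ?t {Suc q..<Suc ?r}"
      using snoc.prems Suc by (intro sum.atLeastLessThan_concat[symmetric]) simp_all
    also have "\<dots> = sum ?term (insert ?r ` index_subsets ?r q \<union> index_subsets ?r (Suc q))"
      unfolding head tail by (rule sum.union_disjoint[symmetric]) (auto simp: index_subsets_def)
    finally show ?thesis using index_subsets_Suc_Suc[of ?r q] Suc by simp
  qed
qed

section \<open>Vandermonde determinants\<close>

definition vandermonde_prod :: "'a::comm_ring_1 list \<Rightarrow> 'a" where
  "vandermonde_prod xs = (\<Prod>i<length xs. \<Prod>j\<in>{i<..<length xs}. xs ! i - xs ! j)"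

lemma vandermonde_prod_Nil [simp]: "vandermonde_prod [] = 1"
  by (simp add: vandermonde_prod_def)

lemma vandermonde_prod_snoc:
  "vandermonde_prod (xs @ [y]) = vandermonde_prod xs * prod_list (map (\<lambda>z. z - y) xs)"
proof -
  let ?r = "length xs"
  have "{?r<..<Suc ?r} = {}" "\<And>i. i < ?r \<Longrightarrow> {i<..<Suc ?r} = insert ?r {i<..<?r}" by auto
  then have "vandermonde_prod (xs @ [y]) = (\<Prod>i<?r. (xs ! i - y) * (\<Prod>j\<in>{i<..<?r}. xs ! i - xs ! j))"
    unfolding vandermonde_prod_def by (auto simp: nth_append intro!: prod.cong)
  then show ?thesis
    by (simp add: vandermonde_prod_def prod.distrib prod.list_conv_set_nth lessThan_atLeast0 mult.commute)
qed

lemma vandermonde_prod_nonzero: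
  "distinct (xs :: 'a::idom list) \<Longrightarrow> vandermonde_prod xs \<noteq> 0"
  unfolding vandermonde_prod_def by (auto simp: prod_zero_iff nth_eq_iff_index_eq)

lemma det_subtract_multiple_of_next_rows:
  fixes A :: "'a::comm_ring_1 mat"
  assumes A: "A \<in> carrier_mat (Suc r) (Suc r)"
  shows "det (mat (Suc r) (Suc r) (\<lambda>(i, j). if i < r then A $$ (i, j) - y * A $$ (Suc i, j) else A $$ (i, j)))
    = det A"
proof -
  let ?n = "Suc r"
  let ?R = "mat ?n ?n (\<lambda>(i, j). if i < r then A $$ (i, j) - y * A $$ (Suc i, j) else A $$ (i, j))"
  define E where "E = mat ?n ?n (\<lambda>(i, k). (if k = i then 1 else 0) - (if k = Suc i then y else (0::'a)))"
  have E: "E \<in> carrier_mat ?n ?n" unfolding E_def by auto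
  have "upper_triangular E" unfolding E_def upper_triangular_def by auto
  moreover have "diag_mat E = map (\<lambda>i. 1) [0..<?n]" unfolding E_def diag_mat_def
    by (intro map_cong) auto
  ultimately have det_E: "det E = 1" using det_upper_triangular[OF _ E] by (simp add: map_replicate_const)
  have "E * A = ?R"
  proof (rule eq_matI)
    fix i j assume i: "i < dim_row ?R" and j: "j < dim_col ?R"
    have "(E * A) $$ (i, j) = (\<Sum>k = 0..<?n. ((if k = i then 1 else 0) - (if k = Suc i then y else 0)) * A $$ (k, j))"
      using i j A unfolding E_def by (simp add: scalar_prod_def)
    also have "\<dots> = (\<Sum>k = 0..<?n. (if k = i then A $$ (k, j) else 0)) - (\<Sum>k = 0..<?n. (if k = Suc i then y * A $$ (k, j) else 0))"
      unfolding sum_subtractf[symmetric] by (rule sum.cong) auto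
    also have "\<dots> = (if i < r then A $$ (i, j) - y * A $$ (Suc i, j) else A $$ (i, j))"
      using i by (auto simp: less_Suc_eq)
    finally show "(E * A) $$ (i, j) = ?R $$ (i, j)"
      using i j by simp
  qed (use E A in auto)
  then show ?thesis using det_mult[OF E A] det_E by simp
qed

theorem det_cols_vandermonde:
  "det_cols (\<lambda>i z. z ^ (length xs - Suc i)) xs = vandermonde_prod (xs :: 'a::comm_ring_1 list)"
proof (induct xs rule: rev_induct)
  case (snoc y xs)
  let ?r = "length xs"
  let ?ys = "xs @ [y]"
  let ?V = "mat (Suc ?r) (Suc ?r) (\<lambda>(i, j). (?ys ! j) ^ (?r - i))"
  define \<psi> where "\<psi> i z = (if i < ?r then z ^ (?r - Suc i) * (z - y) else 1)" for i z
  have V: "?V \<in> carrier_mat (Suc ?r) (Suc ?r)" by auto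
  have pow: "(z::'a) ^ (?r - i) = z * z ^ (?r - Suc i)" if "i < ?r" for z i
    using that by (metis Suc_diff_Suc power_Suc)
  have "mat (Suc ?r) (Suc ?r) (\<lambda>(i, j). \<psi> i (?ys ! j)) =
      mat (Suc ?r) (Suc ?r) (\<lambda>(i, j). if i < ?r then ?V $$ (i, j) - y * ?V $$ (Suc i, j) else ?V $$ (i, j))"
    by (rule eq_matI) (auto simp: \<psi>_def pow algebra_simps)
  then have "det_cols (\<lambda>i z. z ^ (length ?ys - Suc i)) ?ys = det_cols \<psi> ?ys"
    using det_subtract_multiple_of_next_rows[OF V, of y] by (simp add: det_cols_def)
  \<comment> \<open>in the last column only the entry \<open>\<psi> ?r y = 1\<close> survives\<close>
  also have "\<dots> = det_cols (\<lambda>i'. \<psi> (insert_index ?r i')) xs"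
    by (simp add: det_cols_snoc \<psi>_def power_add[symmetric] mult_2[symmetric])
  also have "\<dots> = det_cols (\<lambda>i z. z ^ (?r - Suc i) * (z - y)) xs"
    by (rule det_cols_cong) (auto simp: \<psi>_def insert_index_def)
  also have "\<dots> = vandermonde_prod ?ys"
    unfolding det_cols_mult_col snoc vandermonde_prod_snoc by (simp add: mult.commute)
  finally show ?case .
qed simp

lemma prod_list_map_nths:
  assumes "J \<subseteq> {..<length xs}"
  shows "prod_list (map f (nths xs J)) = (\<Prod>c\<in>J. f (xs ! c))"
  using assms
proof (induct xs arbitrary: J rule: rev_induct)
  case (snoc y xs)
  let ?r = "length xs"
  have fin: "finite J" using snoc.prems finite_subset by blast
  show ?case
  proof (cases "?r \<in> J")
    case True
    define J' where "J' = J - {?r}"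
    have J': "J' \<subseteq> {..<?r}" "J = insert ?r J'" "?r \<notin> J'" "finite J'"
      using snoc.prems True fin unfolding J'_def by (auto simp: less_Suc_eq)
    have "(xs @ [y]) ! c = xs ! c" if "c \<in> J'" for c
      using that J'(1) by (auto simp: nth_append)
    then show ?thesis
      using nths_snoc_insert_last[OF J'(1), of y] snoc.hyps[OF J'(1)] J' by (simp add: mult.commute)
  next
    case False
    then have J: "J \<subseteq> {..<?r}" using snoc.prems by (auto simp: less_Suc_eq)
    then show ?thesis
      using nths_snoc_subset[OF J, of y] snoc.hyps[OF J] by (auto simp: nth_append intro!: prod.cong)
  qed
qed simp

lemma vandermonde_prod_split:
  assumes "J \<subseteq> {..<length xs}"
  shows "vandermonde_prod xs = laplace_sign J * vandermonde_prod (nths xs J) *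
    vandermonde_prod (nths xs ({..<length xs} - J)) * (\<Prod>c\<in>J. \<Prod>a\<in>{..<length xs} - J. xs ! c - xs ! a)"
  using assms
proof (induct xs arbitrary: J rule: rev_induct)
  case Nil
  then show ?case by (simp add: laplace_sign_def)
next
  case (snoc y xs)
  let ?r = "length xs"
  let ?ys = "xs @ [y]"
  have split: "(\<Prod>c<?r. xs ! c - y) = (\<Prod>c\<in>I. xs ! c - y) * (\<Prod>a\<in>{..<?r} - I. xs ! a - y)"
    if "I \<subseteq> {..<?r}" for I
    using prod.subset_diff[OF that, of "\<lambda>c. xs ! c - y"] by (simp add: mult.commute)
  have VP_ys: "vandermonde_prod ?ys = vandermonde_prod xs * (\<Prod>c<?r. xs ! c - y)"
    by (simp add: vandermonde_prod_snoc prod.list_conv_set_nth lessThan_atLeast0)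
  show ?case
  proof (cases "?r \<in> J")
    case True
    define J' where "J' = J - {?r}"
    define K where "K = {..<?r} - J'"
    have J': "J' \<subseteq> {..<?r}" "J = insert ?r J'" "?r \<notin> J'" "finite J'"
      using snoc.prems True finite_subset unfolding J'_def by (auto simp: less_Suc_eq)
    have K: "{..<length ?ys} - J = K" "card K = ?r - card J'" "K \<subseteq> {..<?r}"
      using J' unfolding K_def by (auto simp: card_Diff_subset)
    have sign: "laplace_sign J * (\<Prod>a\<in>K. y - xs ! a) = laplace_sign J' * (\<Prod>a\<in>K. xs ! a - y)"
      using prod.distrib[of "\<lambda>_. -1::'a" "\<lambda>a. y - xs ! a" K] J'
      by (simp add: laplace_sign_insert K(2))
    have "?ys ! c = xs ! c" if "c \<in> J' \<union> K" for c
      using that J'(1) unfolding K_def by (auto simp: nth_append)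
    then have cross: "(\<Prod>c\<in>J. \<Prod>a\<in>K. ?ys ! c - ?ys ! a) =
        (\<Prod>a\<in>K. y - xs ! a) * (\<Prod>c\<in>J'. \<Prod>a\<in>K. xs ! c - xs ! a)"
      using J' by simp
    have nths_J: "nths ?ys J = nths xs J' @ [y]"
      using nths_snoc_insert_last[OF J'(1)] J'(2) by simp
    have VP_J: "vandermonde_prod (nths xs J' @ [y]) = vandermonde_prod (nths xs J') * (\<Prod>c\<in>J'. xs ! c - y)"
      by (simp add: vandermonde_prod_snoc prod_list_map_nths[OF J'(1)])
    have "vandermonde_prod ?ys = laplace_sign J' * (\<Prod>a\<in>K. xs ! a - y) * vandermonde_prod (nths xs J') *
        (\<Prod>c\<in>J'. xs ! c - y) * vandermonde_prod (nths xs K) * (\<Prod>c\<in>J'. \<Prod>a\<in>K. xs ! c - xs ! a)"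
      using snoc.hyps[OF J'(1)] by (simp add: VP_ys split[OF J'(1)] K_def mult_ac)
    also have "\<dots> = laplace_sign J * vandermonde_prod (nths ?ys J) * vandermonde_prod (nths ?ys ({..<length ?ys} - J)) *
        (\<Prod>c\<in>J. \<Prod>a\<in>{..<length ?ys} - J. ?ys ! c - ?ys ! a)"
      unfolding sign[symmetric] K(1) cross nths_J nths_snoc_subset[OF K(3)] VP_J
      by (simp add: mult_ac)
    finally show ?thesis .
  next
    case False
    define K where "K = {..<?r} - J"
    have J: "J \<subseteq> {..<?r}" using snoc.prems False by (auto simp: less_Suc_eq)
    have K: "{..<length ?ys} - J = insert ?r K" "K \<subseteq> {..<?r}" "finite K"
      using J unfolding K_def by auto
    have "?ys ! c = xs ! c" if "c \<in> J \<union> K" for c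
      using that J K(2) by (auto simp: nth_append)
    then have cross: "(\<Prod>c\<in>J. \<Prod>a\<in>insert ?r K. ?ys ! c - ?ys ! a) =
        (\<Prod>c\<in>J. xs ! c - y) * (\<Prod>c\<in>J. \<Prod>a\<in>K. xs ! c - xs ! a)"
      using K unfolding K_def by (simp add: prod.distrib)
    have VP_K: "vandermonde_prod (nths xs K @ [y]) = vandermonde_prod (nths xs K) * (\<Prod>a\<in>K. xs ! a - y)"
      by (simp add: vandermonde_prod_snoc prod_list_map_nths[OF K(2)])
    have "vandermonde_prod ?ys = laplace_sign J * vandermonde_prod (nths xs J) * vandermonde_prod (nths xs K) *
        (\<Prod>a\<in>K. xs ! a - y) * (\<Prod>c\<in>J. xs ! c - y) * (\<Prod>c\<in>J. \<Prod>a\<in>K. xs ! c - xs ! a)"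
      using snoc.hyps[OF J] by (simp add: VP_ys split[OF J] K_def mult_ac)
    also have "\<dots> = laplace_sign J * vandermonde_prod (nths ?ys J) * vandermonde_prod (nths ?ys ({..<length ?ys} - J)) *
        (\<Prod>c\<in>J. \<Prod>a\<in>{..<length ?ys} - J. ?ys ! c - ?ys ! a)"
      unfolding K(1) cross nths_snoc_insert_last[OF K(2)] nths_snoc_subset[OF J] VP_K
      by (simp add: mult_ac)
    finally show ?thesis .
  qed
qed

section \<open>A weighted Vandermonde determinant\<close>

lemma det_cols_weighted_vandermonde_indices:
  fixes xs :: "'a::field list" and g :: "'a \<Rightarrow> 'a"
  assumes dist: "distinct xs" and p: "p \<le> length xs"
  shows "det_cols (\<lambda>r a. if r < p then a ^ (p - Suc r) * g a else a ^ (length xs - Suc r)) xs =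
    vandermonde_prod xs * (\<Sum>J\<in>index_subsets (length xs) p.
      (\<Prod>c\<in>J. g (xs ! c)) / (\<Prod>c\<in>J. \<Prod>a\<in>{..<length xs} - J. xs ! c - xs ! a))"
proof -
  let ?M = "length xs"
  let ?\<phi> = "\<lambda>r a. if r < p then a ^ (p - Suc r) * g a else a ^ (length xs - Suc r)"
  have "laplace_term ?\<phi> xs p J =
      vandermonde_prod xs * ((\<Prod>c\<in>J. g (xs ! c)) / (\<Prod>c\<in>J. \<Prod>a\<in>{..<?M} - J. xs ! c - xs ! a))"
    if J: "J \<in> index_subsets ?M p" for J
  proof -
    let ?K = "{..<?M} - J"
    have JM: "J \<subseteq> {..<?M}" and fin: "finite J" and card: "card J = p"
      using J by (auto simp: index_subsets_def intro: finite_subset)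
    have len_J: "length (nths xs J) = p" and len_K: "length (nths xs ?K) = ?M - p"
      using length_nths_subset[OF JM] length_nths_subset[of ?K xs] card fin
      by (auto simp: card_Diff_subset JM)
    have det_J: "det_cols ?\<phi> (nths xs J) = (\<Prod>c\<in>J. g (xs ! c)) * vandermonde_prod (nths xs J)"
    proof -
      have "det_cols ?\<phi> (nths xs J) = det_cols (\<lambda>i z. z ^ (length (nths xs J) - Suc i) * g z) (nths xs J)"
        by (rule det_cols_cong) (simp add: len_J)
      then show ?thesis
        by (simp add: det_cols_mult_col det_cols_vandermonde prod_list_map_nths[OF JM])
    qed
    have det_K: "det_cols (\<lambda>i. ?\<phi> (i + p)) (nths xs ?K) = vandermonde_prod (nths xs ?K)"
    proof -
      have "det_cols (\<lambda>i. ?\<phi> (i + p)) (nths xs ?K) = det_cols (\<lambda>i z. z ^ (length (nths xs ?K) - Suc i)) (nths xs ?K)"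
        by (rule det_cols_cong) (simp add: len_K ac_simps)
      then show ?thesis by (simp add: det_cols_vandermonde)
    qed
    have "xs ! c - xs ! a \<noteq> 0" if "c \<in> J" "a \<in> ?K" for c a
      using that JM dist by (auto simp: nth_eq_iff_index_eq)
    then have "(\<Prod>c\<in>J. \<Prod>a\<in>?K. xs ! c - xs ! a) \<noteq> 0"
      using fin by (simp add: prod_zero_iff)
    then show ?thesis
      unfolding laplace_term_def det_J det_K
      using vandermonde_prod_split[OF JM] laplace_sign_square[of J] by (simp add: field_simps)
  qed
  then show ?thesis
    by (simp add: det_cols_laplace[OF p] sum_distrib_left)
qed

lemma index_subsets_image_nth:
  assumes "distinct xs"
  shows "image (nth xs) ` index_subsets (length xs) p = {P. P \<subseteq> set xs \<and> card P = p}"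
proof (intro equalityI subsetI)
  have inj: "inj_on (nth xs) {..<length xs}" using assms by (simp add: inj_on_def nth_eq_iff_index_eq)
  fix P
  {
    assume "P \<in> image (nth xs) ` index_subsets (length xs) p"
    then obtain J where "J \<subseteq> {..<length xs}" "card J = p" "P = nth xs ` J"
      by (auto simp: index_subsets_def)
    then show "P \<in> {P. P \<subseteq> set xs \<and> card P = p}"
      using card_image[OF inj_on_subset[OF inj]] by (auto simp: set_conv_nth)
  next
    assume "P \<in> {P. P \<subseteq> set xs \<and> card P = p}"
    then have P: "P \<subseteq> set xs" "card P = p" by auto
    define J where "J = {i. i < length xs \<and> xs ! i \<in> P}"
    have JM: "J \<subseteq> {..<length xs}" and PJ: "P = nth xs ` J"
      using P(1) unfolding J_def by (auto simp: set_conv_nth)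
    then have "card J = p" using P(2) card_image[OF inj_on_subset[OF inj JM]] by simp
    with JM PJ show "P \<in> image (nth xs) ` index_subsets (length xs) p"
      by (auto simp: index_subsets_def)
  }
qed

theorem det_cols_weighted_vandermonde:
  fixes xs :: "'a::field list" and g :: "'a \<Rightarrow> 'a"
  assumes dist: "distinct xs" and p: "p \<le> length xs"
  shows "det_cols (\<lambda>r a. if r < p then a ^ (p - Suc r) * g a else a ^ (length xs - Suc r)) xs =
    vandermonde_prod xs * (\<Sum>P | P \<subseteq> set xs \<and> card P = p. (\<Prod>a\<in>P. g a) / Res P (set xs - P))"
proof -
  let ?M = "length xs"
  let ?F = "\<lambda>P. (\<Prod>a\<in>P. g a) / Res P (set xs - P)"
  have inj: "inj_on (nth xs) {..<?M}" using dist by (simp add: inj_on_def nth_eq_iff_index_eq)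
  have summand: "(\<Prod>c\<in>J. g (xs ! c)) / (\<Prod>c\<in>J. \<Prod>a\<in>{..<?M} - J. xs ! c - xs ! a) = ?F (nth xs ` J)"
    if "J \<in> index_subsets ?M p" for J
  proof -
    have JM: "J \<subseteq> {..<?M}" using that by (simp add: index_subsets_def)
    have "set xs = nth xs ` {..<?M}" by (force simp: set_conv_nth)
    then have "set xs - nth xs ` J = nth xs ` ({..<?M} - J)"
      using inj_on_image_set_diff[OF inj _ JM] by simp
    with inj_on_subset[OF inj JM] inj_on_subset[OF inj, of "{..<?M} - J"] show ?thesis
      by (simp add: Res_def prod.reindex)
  qed
  have "inj_on (image (nth xs)) (index_subsets ?M p)"
    using inj by (auto simp: index_subsets_def inj_on_def inj_on_image_eq_iff)
  then have "(\<Sum>J\<in>index_subsets ?M p. ?F (nth xs ` J)) = (\<Sum>P | P \<subseteq> set xs \<and> card P = p. ?F P)"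
    using sum.reindex[of "image (nth xs)" "index_subsets ?M p" ?F] index_subsets_image_nth[OF dist]
    by simp
  then show ?thesis
    by (simp add: det_cols_weighted_vandermonde_indices[OF dist p] summand cong: sum.cong)
qed

section \<open>The Sylvester-type determinant at a point\<close>

lemma poly_eq_sum_lessThan:
  "degree (q :: 'a::comm_semiring_1 poly) < d \<Longrightarrow> poly q a = (\<Sum>i<d. coeff q i * a ^ i)"
proof -
  assume d: "degree q < d"
  have "poly q a = (\<Sum>i\<le>degree q. coeff q i * a ^ i)" by (rule poly_altdef)
  also have "\<dots> = (\<Sum>i<d. coeff q i * a ^ i)"
    by (rule sum.mono_neutral_left) (use d in \<open>auto simp: coeff_eq_0\<close>)
  finally show ?thesis .
qed

text \<open>\<open>sres_mat True m n k f g\<close> with the variable of its last column replaced by the point \<open>x\<close>.\<close>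

definition sres_mat_at :: "nat \<Rightarrow> nat \<Rightarrow> nat \<Rightarrow> 'a::comm_ring_1 poly \<Rightarrow> 'a poly \<Rightarrow> 'a \<Rightarrow> 'a mat" where
  "sres_mat_at m n k f g x = (let N = m + n - 2 * k in
     mat N N (\<lambda>(i, c).
       let isf = (i < n - k);
           j = (if isf then n - k - 1 - i else m - k - 1 - (i - (n - k)));
           p = (if isf then f else g)
       in if c < N - 1 then (if j \<le> m + n - k - 1 - c then coeff p (m + n - k - 1 - c - j) else 0)
          else (if isf then x ^ j else 0)))"

locale sres_eval =
  fixes m n k :: nat and f g :: "'a::field poly" and x :: 'a and as :: "'a list"
  assumes k_less_m: "k + 1 \<le> m" and k_less_n: "k + 1 \<le> n"
    and degree_f: "degree f = m" and f_monic: "coeff f m = 1"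
    and degree_g: "degree g = n"
    and f_roots: "\<And>a. a \<in> set as \<Longrightarrow> poly f a = 0"
    and x_roots_distinct: "distinct (x # as)" and length_roots: "length as = m"
begin

definition N :: nat where "N = m + n - 2 * k"

definition D :: nat where "D = m + n - k"

definition pts :: "'a list" where "pts = x # as"

text \<open>Row \<open>i\<close> of the \<open>(D + 1) \<times> (D + 1)\<close> matrix \<open>T_ext\<close> lists the coefficients of
  \<open>row_poly i\<close> (that is \<open>x\<^sup>j f\<close>, then \<open>x\<^sup>j g\<close>, then the monomials \<open>x\<^sup>k, \<dots>, 1\<close>) in the degrees
  \<open>col_degree c\<close>, except for column \<open>n - k - 1\<close>, which is the last column of \<open>sres_mat_at\<close>
  moved there. \<open>S_moved\<close> is its upper left \<open>N \<times> N\<close> block.\<close>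

definition row_poly :: "nat \<Rightarrow> 'a poly" where
  "row_poly i = (if i < n - k then monom 1 (n - k - 1 - i) * f
     else if i < N then monom 1 (m - k - 1 - (i - (n - k))) * g else monom 1 (D - i))"

definition last_entry :: "nat \<Rightarrow> 'a" where
  "last_entry i = (if i < n - k then x ^ (n - k - 1 - i) else 0)"

definition col_degree :: "nat \<Rightarrow> nat" where
  "col_degree c = (if c < n - k - 1 then D - 1 - c else D - c)"

definition S_moved :: "'a mat" where
  "S_moved = mat N N (\<lambda>(i, c). if c = n - k - 1 then last_entry i else coeff (row_poly i) (col_degree c))"

definition T_ext :: "'a mat" where
  "T_ext = mat (Suc D) (Suc D) (\<lambda>(i, c). if c = n - k - 1 then last_entry i else coeff (row_poly i) (col_degree c))"

lemma N_D_split: "N = (n - k - 1) + (m - k) + 1" "D = N + k" "Suc D = N + (k + 1)"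
  unfolding N_def D_def using k_less_m k_less_n by auto

lemma Suc_D_split: "Suc D = (n - k) + (m + 1)"
  unfolding D_def using k_less_m k_less_n by auto

lemma sres_mat_at_entry:
  assumes i: "i < N" and c: "c < N"
  shows "sres_mat_at m n k f g x $$ (i, c) = (if c < N - 1 then coeff (row_poly i) (D - 1 - c) else last_entry i)"
proof -
  have "sres_mat_at m n k f g x $$ (i, c) = (let isf = (i < n - k);
           j = (if isf then n - k - 1 - i else m - k - 1 - (i - (n - k)));
           p = (if isf then f else g)
       in if c < N - 1 then (if j \<le> m + n - k - 1 - c then coeff p (m + n - k - 1 - c - j) else 0)
          else (if isf then x ^ j else 0))"
    unfolding sres_mat_at_def N_def[symmetric] Let_def[of N] using i c by simp
  also have "\<dots> = (if c < N - 1 then coeff (row_poly i) (D - 1 - c) else last_entry i)"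
  proof (cases "i < n - k")
    case True
    then show ?thesis unfolding row_poly_def last_entry_def D_def Let_def by (simp add: coeff_monom_mult not_less)
  next
    case False
    then show ?thesis using i unfolding row_poly_def last_entry_def D_def Let_def by (simp add: coeff_monom_mult not_less)
  qed
  finally show ?thesis .
qed

lemma det_sres_mat_at: "det (sres_mat_at m n k f g x) = (-1) ^ (m - k) * det S_moved"
proof -
  let ?S = "sres_mat_at m n k f g x"
  let ?col = "\<lambda>j. if j < n - k - 1 then j else if j < n - k - 1 + 1 then j + (m - k) else j - 1"
  have S: "?S \<in> carrier_mat N N" unfolding sres_mat_at_def N_def by (simp add: Let_def)
  have "mat N N (\<lambda>(i, j). ?S $$ (i, ?col j)) = S_moved"
  proof (rule eq_matI)
    fix i c assume "i < dim_row S_moved" "c < dim_col S_moved"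
    then have i: "i < N" and c: "c < N" unfolding S_moved_def by auto
    consider (before) "c < n - k - 1" | (moved) "c = n - k - 1" | (after) "n - k - 1 < c" by linarith
    then have "?S $$ (i, ?col c) = S_moved $$ (i, c)"
    proof cases
      case before
      then have "c < N - 1" using N_D_split by simp
      with before i c show ?thesis by (simp add: sres_mat_at_entry S_moved_def col_degree_def)
    next
      case moved
      then have "?col c = N - 1" "N - 1 < N" using N_D_split by simp_all
      with moved i c show ?thesis by (simp add: sres_mat_at_entry S_moved_def)
    next
      case after
      then have "?col c = c - 1" "c - 1 < N - 1" "D - 1 - (c - 1) = D - c" using c by auto
      with after i c show ?thesis by (simp add: sres_mat_at_entry S_moved_def col_degree_def)
    qed
    with i c show "mat N N (\<lambda>(i, j). ?S $$ (i, ?col j)) $$ (i, c) = S_moved $$ (i, c)" by simp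
  qed (auto simp: S_moved_def)
  then show ?thesis using det_swap_final_cols[OF S N_D_split(1)] by simp
qed

lemma row_poly_low: "i \<ge> N \<Longrightarrow> row_poly i = monom 1 (D - i)"
  unfolding row_poly_def using N_D_split by auto

lemma last_entry_low: "i \<ge> n - k \<Longrightarrow> last_entry i = 0"
  unfolding last_entry_def by auto

lemma col_degree_ge: "c < N \<Longrightarrow> c \<noteq> n - k - 1 \<Longrightarrow> col_degree c \<ge> k + 1"
  unfolding col_degree_def using N_D_split k_less_m k_less_n by auto

lemma col_degree_high: "c \<ge> n - k \<Longrightarrow> col_degree c = D - c"
  unfolding col_degree_def by auto

lemma T_ext_lower_rows:
  assumes i: "N \<le> i" "i < Suc D" and c: "c < Suc D"
  shows "T_ext $$ (i, c) = (if c = i then 1 else 0)"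
proof -
  have entry: "T_ext $$ (i, c) = (if c = n - k - 1 then 0 else coeff (monom 1 (D - i)) (col_degree c))"
  proof -
    have "last_entry i = 0" using i N_D_split by (intro last_entry_low) auto
    moreover have "row_poly i = monom 1 (D - i)" using i by (intro row_poly_low)
    ultimately show ?thesis using i c unfolding T_ext_def by simp
  qed
  consider "c < N" | "N \<le> c" by linarith
  then show ?thesis
  proof cases
    case 1
    have "D - i \<le> k" using i N_D_split(2) by arith
    then have "D - i \<noteq> col_degree c" if "c \<noteq> n - k - 1"
      using col_degree_ge[OF 1 that] by auto
    then show ?thesis using 1 i by (auto simp: entry coeff_monom)
  next
    case 2
    then have "n - k \<le> c" using N_D_split(1) by linarith
    then have "c \<noteq> n - k - 1" "col_degree c = D - c" using k_less_n by (auto intro: col_degree_high)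
    then show ?thesis using i c by (auto simp: entry coeff_monom)
  qed
qed

lemma det_T_ext: "det T_ext = det S_moved"
proof -
  define R where "R = mat N (k + 1) (\<lambda>(i, c). T_ext $$ (i, N + c))"
  let ?B = "four_block_mat S_moved R (0\<^sub>m (k + 1) N) (1\<^sub>m (k + 1))"
  have S: "S_moved \<in> carrier_mat N N" unfolding S_moved_def by auto
  have blocks: "T_ext = ?B"
  proof (rule eq_matI)
    fix i c assume "i < dim_row ?B" "c < dim_col ?B"
    then have i: "i < N + (k + 1)" and c: "c < N + (k + 1)" using S by auto
    then have D: "i < Suc D" "c < Suc D" using N_D_split(3) by auto
    show "T_ext $$ (i, c) = ?B $$ (i, c)"
    proof (cases "i < N")
      case True
      then show ?thesis using i c D S unfolding T_ext_def S_moved_def R_def by auto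
    next
      case False
      then show ?thesis using i c D S by (auto simp: T_ext_lower_rows)
    qed
  qed (use N_D_split S in \<open>auto simp: T_ext_def\<close>)
  have "det T_ext = det S_moved * det (1\<^sub>m (k + 1) :: 'a mat)"
    unfolding blocks by (rule det_four_block_mat_lower_left_zero[OF S]) (auto simp: R_def)
  then show ?thesis by simp
qed

text \<open>Right multiplication by \<open>W_eval\<close> keeps the first \<open>n - k\<close> columns and evaluates every row
  polynomial at the points \<open>pts\<close>; the entry \<open>- f(x)\<close> cancels \<open>x\<^sup>j f(x)\<close> in the \<open>f\<close>-rows, so that
  these rows vanish at all points.\<close>

definition W_eval :: "'a mat" where
  "W_eval = mat (Suc D) (Suc D) (\<lambda>(c, s).
     if s < n - k then (if c = s then 1 else 0)
     else if c = n - k - 1 then (if s = n - k then - poly f x else 0)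
     else (pts ! (s - (n - k))) ^ (col_degree c))"

lemma length_pts: "length pts = m + 1" unfolding pts_def using length_roots by simp

lemma det_W_eval: "det W_eval = vandermonde_prod pts"
proof -
  define Z where "Z = mat (n - k) (m + 1) (\<lambda>(c, t). W_eval $$ (c, n - k + t))"
  define V where "V = mat (m + 1) (m + 1) (\<lambda>(r, t). (pts ! t) ^ (m - r))"
  let ?B = "four_block_mat (1\<^sub>m (n - k)) Z (0\<^sub>m (m + 1) (n - k)) V"
  have I: "(1\<^sub>m (n - k) :: 'a mat) \<in> carrier_mat (n - k) (n - k)" by auto
  have blocks: "W_eval = ?B"
  proof (rule eq_matI)
    fix c s assume c: "c < dim_row ?B" and s: "s < dim_col ?B"
    then have c': "c < (n - k) + (m + 1)" and s': "s < (n - k) + (m + 1)" unfolding V_def by auto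
    then have cD: "c < Suc D" and sD: "s < Suc D" using Suc_D_split by auto
    show "W_eval $$ (c, s) = ?B $$ (c, s)"
    proof (cases "c < n - k")
      case True
      show ?thesis
      proof (cases "s < n - k")
        case True
        moreover have "dim_row V = m + 1" "dim_col V = m + 1" unfolding V_def by auto
        ultimately show ?thesis using \<open>c < n - k\<close> c' s' cD sD unfolding W_eval_def by simp
      next
        case False
        have e: "n - k + (s - (n - k)) = s" using False by simp
        have "Z $$ (c, s - (n - k)) = W_eval $$ (c, s)" unfolding Z_def using \<open>c < n - k\<close> s' e by simp
        moreover have "dim_row V = m + 1" "dim_col V = m + 1" unfolding V_def by auto
        ultimately show ?thesis using \<open>c < n - k\<close> c' s' False by simp
      qed
    next
      case cF: False
      have cne: "c \<noteq> n - k - 1" using cF k_less_n by arith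
      have dgc: "col_degree c = m - (c - (n - k))" using cF col_degree_high[of c] k_less_n unfolding D_def by arith
      have nk0: "n - k > 0" using k_less_n by arith
      show ?thesis using c' s' cD sD cF cne nk0 unfolding W_eval_def Z_def V_def by (auto simp: dgc)
    qed
  qed (use Suc_D_split in \<open>auto simp: W_eval_def V_def\<close>)
  have "det W_eval = det (1\<^sub>m (n - k) :: 'a mat) * det V"
    unfolding blocks by (rule det_four_block_mat_lower_left_zero[OF I]) (auto simp: Z_def V_def)
  also have "det V = det_cols (\<lambda>i z. z ^ (length pts - Suc i)) pts"
    unfolding det_cols_def V_def length_pts by (intro arg_cong[of _ _ det] eq_matI) auto
  finally show ?thesis unfolding det_cols_vandermonde by simp
qed

lemma sum_col_degree_eq_poly:
  assumes "degree (q :: 'a poly) < D"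
  shows "(\<Sum>c\<in>{0..<Suc D} - {n - k - 1}. coeff q (col_degree c) * a ^ (col_degree c)) = poly q a"
proof -
  have "(\<Sum>c\<in>{0..<Suc D} - {n - k - 1}. coeff q (col_degree c) * a ^ (col_degree c)) = (\<Sum>d<D. coeff q d * a ^ d)"
  proof (rule sum.reindex_bij_witness[where i = "\<lambda>d. if d \<ge> m + 1 then D - 1 - d else D - d" and j = col_degree])
    fix c assume c: "c \<in> {0..<Suc D} - {n - k - 1}"
    show "col_degree c \<in> {..<D}" using c k_less_m k_less_n unfolding col_degree_def D_def by auto
    show "(if col_degree c \<ge> m + 1 then D - 1 - col_degree c else D - col_degree c) = c" using c k_less_m k_less_n unfolding col_degree_def D_def by auto
  next
    fix d assume d: "d \<in> {..<D}"
    show "(if d \<ge> m + 1 then D - 1 - d else D - d) \<in> {0..<Suc D} - {n - k - 1}"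
      using d k_less_m k_less_n unfolding D_def by auto
    show "col_degree (if d \<ge> m + 1 then D - 1 - d else D - d) = d"
      using d k_less_m k_less_n unfolding col_degree_def D_def by auto
  qed simp
  also have "\<dots> = poly q a" using poly_eq_sum_lessThan[OF assms] by simp
  finally show ?thesis .
qed

lemma degree_row_poly_less: "i < Suc D \<Longrightarrow> degree (row_poly i) < D"
proof -
  assume i: "i < Suc D"
  have f0: "f \<noteq> 0" using f_monic by auto
  have g0: "g \<noteq> 0" using degree_g k_less_n by auto
  show ?thesis
  proof (cases "i < n - k")
    case True
    then show ?thesis using k_less_m k_less_n f0 unfolding row_poly_def D_def by (simp add: degree_mult_eq degree_monom_eq degree_f)
  next
    case False
    show ?thesis
    proof (cases "i < N")
      case True
      then show ?thesis using False k_less_m k_less_n g0 unfolding row_poly_def D_def N_def by (simp add: degree_mult_eq degree_monom_eq degree_g)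
    next
      case False2: False
      then show ?thesis using False i k_less_m k_less_n unfolding row_poly_def D_def N_def by (simp add: degree_monom_eq)
    qed
  qed
qed

lemma T_W_entry:
  assumes i: "i < Suc D" and s: "s < Suc D"
  shows "(T_ext * W_eval) $$ (i, s) = (if s < n - k then T_ext $$ (i, s)
     else last_entry i * (if s = n - k then - poly f x else 0) + poly (row_poly i) (pts ! (s - (n - k))))"
proof -
  have "(T_ext * W_eval) $$ (i, s) = (\<Sum>c\<in>{0..<Suc D}. T_ext $$ (i, c) * W_eval $$ (c, s))"
    using i s unfolding T_ext_def W_eval_def by (simp add: scalar_prod_def)
  also have "\<dots> = (if s < n - k then T_ext $$ (i, s)
     else last_entry i * (if s = n - k then - poly f x else 0) + poly (row_poly i) (pts ! (s - (n - k))))"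
  proof (cases "s < n - k")
    case True
    have "(\<Sum>c\<in>{0..<Suc D}. T_ext $$ (i, c) * W_eval $$ (c, s)) = (\<Sum>c\<in>{0..<Suc D}. if c = s then T_ext $$ (i, c) else 0)"
      using True s unfolding W_eval_def by (intro sum.cong) auto
    also have "\<dots> = T_ext $$ (i, s)" using s by simp
    finally show ?thesis using True by simp
  next
    case False
    let ?a = "pts ! (s - (n - k))"
    have nk: "n - k - 1 \<in> {0..<Suc D}" unfolding D_def by auto
    have "(\<Sum>c\<in>{0..<Suc D}. T_ext $$ (i, c) * W_eval $$ (c, s)) =
       T_ext $$ (i, n - k - 1) * W_eval $$ (n - k - 1, s) + (\<Sum>c\<in>{0..<Suc D} - {n - k - 1}. T_ext $$ (i, c) * W_eval $$ (c, s))"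
      by (rule sum.remove[OF _ nk]) simp
    also have "T_ext $$ (i, n - k - 1) * W_eval $$ (n - k - 1, s) = last_entry i * (if s = n - k then - poly f x else 0)"
      using i s nk False unfolding T_ext_def W_eval_def by auto
    also have "(\<Sum>c\<in>{0..<Suc D} - {n - k - 1}. T_ext $$ (i, c) * W_eval $$ (c, s)) =
       (\<Sum>c\<in>{0..<Suc D} - {n - k - 1}. coeff (row_poly i) (col_degree c) * ?a ^ (col_degree c))"
      using i s False unfolding T_ext_def W_eval_def by (intro sum.cong) auto
    also have "\<dots> = poly (row_poly i) ?a" by (rule sum_col_degree_eq_poly[OF degree_row_poly_less[OF i]])
    finally show ?thesis using False by simp
  qed
  finally show ?thesis .
qed


definition F_block :: "'a mat" where
  "F_block = mat (n - k) (n - k) (\<lambda>(i, s). T_ext $$ (i, s))"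

definition G_block :: "'a mat" where
  "G_block = mat (m + 1) (n - k) (\<lambda>(r, s). T_ext $$ (n - k + r, s))"

definition eval_block :: "'a mat" where
  "eval_block = mat (m + 1) (m + 1) (\<lambda>(r, t). poly (row_poly (n - k + r)) (pts ! t))"

lemma T_W_blocks: "T_ext * W_eval = four_block_mat F_block (0\<^sub>m (n - k) (m + 1)) G_block eval_block"
proof (rule eq_matI)
  let ?B = "four_block_mat F_block (0\<^sub>m (n - k) (m + 1)) G_block eval_block"
  fix i s assume i: "i < dim_row ?B" and s: "s < dim_col ?B"
  have dims: "dim_row F_block = n - k" "dim_col F_block = n - k" "dim_row eval_block = m + 1" "dim_col eval_block = m + 1"
    unfolding F_block_def eval_block_def by auto
  from i s have i': "i < (n - k) + (m + 1)" and s': "s < (n - k) + (m + 1)" using dims by auto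
  then have iD: "i < Suc D" and sD: "s < Suc D" using Suc_D_split by auto
  show "(T_ext * W_eval) $$ (i, s) = ?B $$ (i, s)"
  proof (cases "s < n - k")
    case True
    then show ?thesis unfolding T_W_entry[OF iD sD] using i' s' dims by (simp add: F_block_def G_block_def)
  next
    case sF: False
    let ?a = "pts ! (s - (n - k))"
    show ?thesis
    proof (cases "i < n - k")
      case True
      define j where "j = n - k - 1 - i"
      have row: "row_poly i = monom 1 j * f" and last: "last_entry i = x ^ j"
        using True unfolding row_poly_def last_entry_def j_def by auto
      have "last_entry i * (if s = n - k then - poly f x else 0) + poly (row_poly i) ?a = 0"
      proof (cases "s = n - k")
        case True
        then have "?a = x" unfolding pts_def by simp
        then show ?thesis using True unfolding row last by (simp add: poly_monom)
      next
        case False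
        then have "?a \<in> set as" using sF s' length_roots unfolding pts_def
          by (cases "s - (n - k)") (auto simp: nth_Cons)
        then have "poly f ?a = 0" by (rule f_roots)
        then show ?thesis using False unfolding row last by (simp add: poly_monom)
      qed
      then show ?thesis unfolding T_W_entry[OF iD sD] using i' s' dims True sF by simp
    next
      case iF: False
      have "last_entry i = 0" using iF by (rule last_entry_low[OF leI])
      moreover have "n - k + (i - (n - k)) = i" using iF by simp
      ultimately show ?thesis unfolding T_W_entry[OF iD sD] using i' s' dims iF sF by (simp add: eval_block_def)
    qed
  qed
qed (auto simp: T_ext_def W_eval_def F_block_def eval_block_def Suc_D_split)

lemma F_block_entry:
  assumes i: "i < n - k" and s: "s < n - k"
  shows "F_block $$ (i, s) =
    (if s = n - k - 1 then x ^ (n - k - 1 - i) else if m + i < s then 0 else coeff f (m + i - s))"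
proof (cases "s = n - k - 1")
  case True
  then show ?thesis using i s Suc_D_split unfolding F_block_def T_ext_def last_entry_def by simp
next
  case False
  define u where "u = n - k - 1"
  have iu: "i \<le> u" and su: "s < u" using i s False unfolding u_def by auto
  have "D = m + u + 1" unfolding u_def D_def using k_less_n by simp
  then have "col_degree s = m + (u - s)" using su unfolding col_degree_def u_def by simp
  moreover have "row_poly i = monom 1 (u - i) * f" using i unfolding row_poly_def u_def by simp
  moreover have "(m + (u - s) < u - i) = (m + i < s)" "m + (u - s) - (u - i) = m + i - s"
    using iu su by arith+
  ultimately show ?thesis
    using False i s Suc_D_split unfolding F_block_def T_ext_def u_def by (simp add: coeff_monom_mult)
qed

lemma det_F_block: "det F_block = 1"
proof -
  have F: "F_block \<in> carrier_mat (n - k) (n - k)" unfolding F_block_def by auto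
  have "upper_triangular F_block" unfolding upper_triangular_def
  proof (intro allI impI)
    fix i s assume "i < dim_row F_block" and "s < i"
    then have "i < n - k" "s < n - k" "s \<noteq> n - k - 1" "coeff f (m + i - s) = 0"
      unfolding F_block_def by (auto intro: coeff_eq_0 simp: degree_f)
    then show "F_block $$ (i, s) = 0" by (simp add: F_block_entry)
  qed
  moreover have "diag_mat F_block = map (\<lambda>i. 1) [0..<n - k]"
    unfolding diag_mat_def using f_monic F
    by (intro map_cong) (auto simp: F_block_entry)
  ultimately show ?thesis using det_upper_triangular[OF _ F] by (simp add: map_replicate_const)
qed

lemma det_eval_block:
  "det eval_block = vandermonde_prod pts *
    (\<Sum>P | P \<subseteq> set pts \<and> card P = m - k. (\<Prod>a\<in>P. poly g a) / Res P (set pts - P))"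
proof -
  let ?\<phi> = "\<lambda>r a. if r < m - k then a ^ (m - k - Suc r) * poly g a else a ^ (length pts - Suc r)"
  have "row_poly (n - k + r) = (if r < m - k then monom 1 (m - k - Suc r) * g else monom 1 (m - r))"
    if "r < m + 1" for r
    using that k_less_m k_less_n unfolding row_poly_def N_def D_def by auto
  then have "eval_block = mat (length pts) (length pts) (\<lambda>(r, t). ?\<phi> r (pts ! t))"
    by (intro eq_matI) (auto simp: eval_block_def length_pts poly_monom)
  moreover have "distinct pts" using x_roots_distinct unfolding pts_def .
  ultimately show ?thesis
    using det_cols_weighted_vandermonde[of pts "m - k" "poly g"] length_pts by (simp add: det_cols_def)
qed

theorem det_sres_mat_at_eq:
  "det (sres_mat_at m n k f g x) = (-1) ^ (m - k) *
    (\<Sum>P | P \<subseteq> set pts \<and> card P = m - k. (\<Prod>a\<in>P. poly g a) / Res P (set pts - P))"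
proof -
  have Tc: "T_ext \<in> carrier_mat (Suc D) (Suc D)" unfolding T_ext_def by simp
  have Wc: "W_eval \<in> carrier_mat (Suc D) (Suc D)" unfolding W_eval_def by simp
  have Fc: "F_block \<in> carrier_mat (n - k) (n - k)" unfolding F_block_def by auto
  have Gc: "G_block \<in> carrier_mat (m + 1) (n - k)" unfolding G_block_def by auto
  have GUc: "eval_block \<in> carrier_mat (m + 1) (m + 1)" unfolding eval_block_def by auto
  have "det T_ext * det W_eval = det (T_ext * W_eval)" by (rule det_mult[OF Tc Wc, symmetric])
  also have "\<dots> = det F_block * det eval_block" unfolding T_W_blocks
    by (rule det_four_block_mat_upper_right_zero[OF Fc refl Gc GUc])
  finally have "det T_ext * vandermonde_prod pts = vandermonde_prod pts *
      (\<Sum>P | P \<subseteq> set pts \<and> card P = m - k. (\<Prod>a\<in>P. poly g a) / Res P (set pts - P))"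
    unfolding det_W_eval det_F_block det_eval_block by simp
  moreover have "vandermonde_prod pts \<noteq> 0" using x_roots_distinct unfolding pts_def by (intro vandermonde_prod_nonzero) simp
  ultimately have "det T_ext =
      (\<Sum>P | P \<subseteq> set pts \<and> card P = m - k. (\<Prod>a\<in>P. poly g a) / Res P (set pts - P))"
    by (simp add: mult.commute)
  then show ?thesis unfolding det_sres_mat_at det_T_ext by simp
qed

end



section \<open>Passage to the rational function field\<close>

lemma const_rf_to_fract: "const_rf a = to_fract [:a:]"
  unfolding const_rf_def to_fract_def ..

interpretation const_rf: comm_ring_hom const_rf
  by unfold_locales (simp_all add: const_rf_to_fract one_pCons[symmetric] flip: to_fract_add to_fract_mult)

lemma to_rf_eq_to_fract: "to_rf = to_fract"
  by (rule ext) (simp add: to_rf_def to_fract_def)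

interpretation to_rf: comm_ring_hom to_rf
  unfolding to_rf_eq_to_fract by unfold_locales simp_all

lemma inj_const_rf: "inj const_rf"
  unfolding inj_def const_rf_to_fract by simp

lemma X_rf_neq_const_rf: "X_rf \<noteq> const_rf a"
  unfolding X_rf_def const_rf_def by (simp add: eq_fract)

lemma to_rf_const: "to_rf [:c:] = const_rf c"
  unfolding to_rf_def const_rf_def ..

lemma to_rf_monom_1: "to_rf (monom (1::'a::field) j) = X_rf ^ j"
proof -
  have "to_rf [:0, 1::'a:] = X_rf" unfolding X_rf_def to_rf_def ..
  then show ?thesis by (simp only: monom_altdef smult_1_left to_rf.hom_power)
qed

lemma (in comm_ring_hom) coeff_prod_linear_factors:
  assumes "finite S"
  shows "coeff (\<Prod>a\<in>S. [:- hom a, 1:]) e = hom (coeff (\<Prod>a\<in>S. [:- a, 1:]) e)"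
  using assms
proof (induct S arbitrary: e rule: finite_induct)
  case (insert a S)
  then show ?case by (cases e) (simp_all add: coeff_pCons' hom_distribs)
qed simp

lemma degree_prod_linear_factors:
  "finite S \<Longrightarrow> degree (\<Prod>a\<in>S. [:- a, 1:]) = card (S :: 'a::field set)"
  by (subst degree_prod_sum_eq) auto

lemma poly_prod_linear_factors: "poly (\<Prod>b\<in>S. [:- b, 1:]) a = (\<Prod>b\<in>S. a - (b::'a::comm_ring_1))"
  unfolding poly_prod by (rule prod.cong) auto

lemma Res_swap: "Res Y Z = (-1) ^ (card Y * card Z) * (Res Z Y :: 'a::comm_ring_1)"
proof -
  have "Res Y Z = (\<Prod>y\<in>Y. (-1) ^ card Z * (\<Prod>z\<in>Z. z - y))"
    unfolding Res_def by (subst prod_constant[symmetric], subst prod.distrib[symmetric]) simp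
  also have "\<dots> = (-1) ^ (card Y * card Z) * (\<Prod>y\<in>Y. \<Prod>z\<in>Z. z - y)"
    by (simp add: prod.distrib power_mult[symmetric] mult.commute)
  also have "(\<Prod>y\<in>Y. \<Prod>z\<in>Z. z - y) = Res Z Y" unfolding Res_def by (rule prod.swap)
  finally show ?thesis .
qed

lemma sum_Res_complements:
  fixes X B :: "'a::field set"
  assumes X: "finite X" and q: "q \<le> card X"
  shows "(\<Sum>C | C \<subseteq> X \<and> card C = q. Res (X - C) B / Res C (X - C)) =
    (-1) ^ (q * (card X - q)) * (\<Sum>P | P \<subseteq> X \<and> card P = card X - q. Res P B / Res P (X - P))"
  unfolding sum_distrib_left
proof (rule sum.reindex_bij_witness[where i = "\<lambda>P. X - P" and j = "\<lambda>C. X - C"])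
  fix C assume "C \<in> {C. C \<subseteq> X \<and> card C = q}"
  then have C: "C \<subseteq> X" "card C = q" "finite C" using X finite_subset by auto
  then have card: "card (X - C) = card X - q" using X by (simp add: card_Diff_subset)
  show "X - (X - C) = C" "X - C \<in> {P. P \<subseteq> X \<and> card P = card X - q}" using C card by auto
  have "Res C (X - C) = (-1) ^ (q * (card X - q)) * Res (X - C) C"
    using Res_swap[of C "X - C"] X C card by simp
  then show "(-1) ^ (q * (card X - q)) * (Res (X - C) B / Res (X - C) (X - (X - C))) =
      Res (X - C) B / Res C (X - C)"
    using \<open>X - (X - C) = C\<close> by (cases "even (q * (card X - q))") simp_all
next
  fix P assume "P \<in> {P. P \<subseteq> X \<and> card P = card X - q}"
  then have P: "P \<subseteq> X" "card P = card X - q" "finite P" using X finite_subset by auto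
  show "X - (X - P) = P" "X - P \<in> {C. C \<subseteq> X \<and> card C = q}"
    using P X q by (auto simp: card_Diff_subset)
qed

lemma map_poly_const_rf_prod_linear_factors:
  assumes "finite A"
  shows "map_poly const_rf (\<Prod>a\<in>A. [:- a, 1:]) = (\<Prod>a\<in>const_rf ` A. [:- a, 1:])"
proof -
  have "(\<Prod>a\<in>const_rf ` A. [:- a, 1:]) = (\<Prod>a\<in>A. [:- const_rf a, 1:])"
    using prod.reindex[OF inj_on_subset[OF inj_const_rf subset_UNIV], of "\<lambda>a. [:- a, 1:]" A] by simp
  then show ?thesis
    by (intro poly_eqI) (simp add: coeff_map_poly const_rf.coeff_prod_linear_factors[OF assms])
qed

lemma map_mat_to_rf_sres_mat:
  "map_mat to_rf (sres_mat True m n k f g) =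
    sres_mat_at m n k (map_poly const_rf f) (map_poly const_rf g) X_rf"
  by (rule eq_matI)
    (auto simp: sres_mat_def sres_mat_at_def Let_def shcoeff_def to_rf_monom_1 to_rf_const coeff_map_poly)

lemma sres_eval_prod_linear_factors:
  fixes A B :: "'a::field set"
  assumes A: "set as = A" "distinct as" and B: "finite B"
    and kA: "k + 1 \<le> card A" and kB: "k + 1 \<le> card B" and x: "x \<notin> A"
  shows "sres_eval (card A) (card B) k (\<Prod>a\<in>A. [:- a, 1:]) (\<Prod>b\<in>B. [:- b, 1:]) x as"
proof
  let ?F = "\<Prod>a\<in>A. [:- a, 1:]"
  have "finite A" using A(1) by auto
  then have deg_F: "degree ?F = card A" by (rule degree_prod_linear_factors)
  show "k + 1 \<le> card A" "k + 1 \<le> card B" "degree ?F = card A" by (fact kA kB deg_F)+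
  show "coeff ?F (card A) = 1" using lead_coeff_prod[of "\<lambda>a. [:- a, 1:]" A] by (simp only: deg_F) simp
  show "degree (\<Prod>b\<in>B. [:- b, 1:]) = card B" using B by (simp add: degree_prod_linear_factors)
  show "poly ?F a = 0" if "a \<in> set as" for a
    using that A \<open>finite A\<close> by (simp add: poly_prod_linear_factors prod_zero_iff)
  show "distinct (x # as)" using A x by simp
  show "length as = card A" using A distinct_card by metis
qed

theorem to_rf_Fk_prod_linear_factors:
  fixes A B :: "'a::field set"
  assumes A: "finite A" and B: "finite B" and kA: "k + 1 \<le> card A" and kB: "k + 1 \<le> card B"
  shows "to_rf (Fk (card A) (card B) k (\<Prod>a\<in>A. [:- a, 1:]) (\<Prod>b\<in>B. [:- b, 1:])) =
    (-1) ^ (k * (card A - k)) *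
    (\<Sum>C | C \<subseteq> insert X_rf (const_rf ` A) \<and> card C = k + 1.
       Res (insert X_rf (const_rf ` A) - C) (const_rf ` B) / Res C (insert X_rf (const_rf ` A) - C))"
proof -
  define AX where "AX = insert X_rf (const_rf ` A)"
  let ?F = "\<Prod>a\<in>const_rf ` A. [:- a, 1:]"
  let ?G = "\<Prod>b\<in>const_rf ` B. [:- b, 1:]"
  let ?m = "card A" and ?n = "card B"
  have card: "card (const_rf ` A) = ?m" "card (const_rf ` B) = ?n"
    by (simp_all add: card_image inj_on_subset[OF inj_const_rf])
  obtain as where as: "set as = const_rf ` A" "distinct as"
    using finite_distinct_list[of "const_rf ` A"] A by blast
  have X: "X_rf \<notin> const_rf ` A" using X_rf_neq_const_rf by auto
  interpret sres_eval ?m ?n k ?F ?G X_rf as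
    using sres_eval_prod_linear_factors[OF as _ _ _ X, of "const_rf ` B" k] B kA kB card by simp
  have pts: "set pts = AX" "finite AX" "card AX = ?m + 1"
    using as X A card unfolding pts_def AX_def by auto
  have "to_rf (Fk ?m ?n k (\<Prod>a\<in>A. [:- a, 1:]) (\<Prod>b\<in>B. [:- b, 1:])) = det (sres_mat_at ?m ?n k ?F ?G X_rf)"
    by (simp add: Fk_def to_rf.hom_det[symmetric] map_mat_to_rf_sres_mat
        map_poly_const_rf_prod_linear_factors A B)
  also have "\<dots> = (-1) ^ (?m - k) *
      (\<Sum>P | P \<subseteq> AX \<and> card P = ?m - k. Res P (const_rf ` B) / Res P (AX - P))"
    by (simp add: det_sres_mat_at_eq pts poly_prod_linear_factors Res_def)
  also have "\<dots> = (-1) ^ (k * (?m - k)) *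
      (\<Sum>C | C \<subseteq> AX \<and> card C = k + 1. Res (AX - C) (const_rf ` B) / Res C (AX - C))"
  proof -
    have "(k + 1) * (?m - k) = k * (?m - k) + (?m - k)" by simp
    then have "(-1::'a poly fract) ^ (?m - k) = (-1) ^ (k * (?m - k)) * (-1) ^ ((k + 1) * (?m - k))"
      by (simp only: power_add left_minus_one_mult_self)
    moreover have "card AX - (k + 1) = ?m - k" using pts by simp
    ultimately show ?thesis
      using sum_Res_complements[of AX "k + 1" "const_rf ` B"] pts kA by (simp add: mult.assoc)
  qed
  finally show ?thesis unfolding AX_def .
qed

lemma Gk_eq_Fk_swap:
  assumes "k + 1 \<le> m" and "k + 1 \<le> n"
  shows "Gk m n k f g = (-1) ^ ((m - k) * (n - k)) * Fk n m k g (f :: 'a::comm_ring_1 poly)"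
proof -
  let ?A = "sres_mat False m n k f g"
  let ?M = "(m - k) + (n - k)"
  let ?row = "\<lambda>i. if i < m - k then i + (n - k) else i - (m - k)"
  have N: "m + n - 2 * k = ?M" "n + m - 2 * k = ?M" using assms by auto
  have A: "?A \<in> carrier_mat ?M ?M" unfolding sres_mat_def Let_def N by simp
  have "mat ?M ?M (\<lambda>(i, j). ?A $$ (?row i, j)) = sres_mat True n m k g f"
  proof (rule eq_matI)
    fix i j assume "i < dim_row (sres_mat True n m k g f)" "j < dim_col (sres_mat True n m k g f)"
    then have i: "i < ?M" and j: "j < ?M" unfolding sres_mat_def Let_def N by auto
    have "?row i < ?M" using i by auto
    moreover have "?row i < n - k \<longleftrightarrow> \<not> i < m - k" using i by auto
    ultimately show "mat ?M ?M (\<lambda>(i, j). ?A $$ (?row i, j)) $$ (i, j) = sres_mat True n m k g f $$ (i, j)"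
      using i j unfolding sres_mat_def Let_def N by (auto simp: add.commute[of n m])
  qed (auto simp: sres_mat_def Let_def N)
  then show ?thesis
    using det_swap_rows[OF A] unfolding Gk_def Fk_def by simp
qed

theorem proposition3p12:
  fixes A B :: "'a::field set" and k :: nat
  assumes "finite A" and "finite B"
    and "k + 1 \<le> card A" and "k + 1 \<le> card B"
  defines "f \<equiv> (\<Prod>a\<in>A. [:- a, 1:])"
    and "g \<equiv> (\<Prod>b\<in>B. [:- b, 1:])"
    and "AX \<equiv> insert X_rf (const_rf ` A)"
    and "BX \<equiv> insert X_rf (const_rf ` B)"
  shows "to_rf (Fk (card A) (card B) k f g) =
           (-1) ^ (k * (card A - k)) *
           (\<Sum>C\<in>{C. C \<subseteq> AX \<and> card C = k + 1}.
               Res (AX - C) (const_rf ` B) / Res C (AX - C)) \<and>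
         to_rf (Gk (card A) (card B) k f g) =
           (-1) ^ (card A * (card B - k)) *
           (\<Sum>D\<in>{D. D \<subseteq> BX \<and> card D = k + 1}.
               Res (BX - D) (const_rf ` A) / Res D (BX - D))"
proof
  show "to_rf (Fk (card A) (card B) k f g) = (-1) ^ (k * (card A - k)) *
      (\<Sum>C\<in>{C. C \<subseteq> AX \<and> card C = k + 1}. Res (AX - C) (const_rf ` B) / Res C (AX - C))"
    unfolding f_def g_def AX_def using assms(1-4) by (rule to_rf_Fk_prod_linear_factors)
  have "card A * (card B - k) = (card A - k) * (card B - k) + k * (card B - k)"
    using assms(3) by (simp add: add_mult_distrib[symmetric])
  then have sign: "(-1::'a poly fract) ^ ((card A - k) * (card B - k)) =
      (-1) ^ (card A * (card B - k)) * (-1) ^ (k * (card B - k))"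
    by (simp add: power_add mult.assoc)
  have "to_rf (Gk (card A) (card B) k f g) = (-1) ^ (card A * (card B - k)) *
      ((-1) ^ (k * (card B - k)) * to_rf (Fk (card B) (card A) k g f))"
    using assms(3,4) by (simp add: Gk_eq_Fk_swap to_rf.hom_mult to_rf.hom_power to_rf.hom_uminus sign mult.assoc)
  also have "(-1) ^ (k * (card B - k)) * to_rf (Fk (card B) (card A) k g f) =
      (\<Sum>D\<in>{D. D \<subseteq> BX \<and> card D = k + 1}. Res (BX - D) (const_rf ` A) / Res D (BX - D))"
    unfolding f_def g_def BX_def using assms
    by (simp add: to_rf_Fk_prod_linear_factors left_minus_one_mult_self)
  finally show "to_rf (Gk (card A) (card B) k f g) = (-1) ^ (card A * (card B - k)) *
      (\<Sum>D\<in>{D. D \<subseteq> BX \<and> card D = k + 1}. Res (BX - D) (const_rf ` A) / Res D (BX - D))" .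
qed

end
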